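(* Let $h$ be an odd positive integer, $m=3h$, $e=3^h$, and for $u\in\mathrm{GF}(3^m)$ let $Q_u(y)=\mathrm{Tr}(uy^{e+1}+y^2)$, $y\in\mathrm{GF}(3^m)$. Then for every $u\in\mathrm{GF}(3^m)$, at least one of the quadratic forms $Q_u$ and $Q_{-1-u}$ has rank $m$.
   Context: $\mathrm{Tr}$ denotes the absolute trace from $\mathrm{GF}(3^m)$ onto $\mathrm{GF}(3)$. The rank of a quadratic form $Q:\mathrm{GF}(3^m)\to\mathrm{GF}(3)$ is $m-\dim_{\mathrm{GF}(3)}V_Q$, where $V_Q=\{x: Q(x+z)-Q(x)-Q(z)=0\ \text{for all } z\in\mathrm{GF}(3^m)\}$. (For $Q_u$ one has $Q_u(y+z)-Q_u(y)-Q_u(z)=\mathrm{Tr}((u^{e^2}y^{e^2}+uy^e-y)z)$.) *)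

theory Defs
  imports Main
begin

text \<open>The field GF(3^m) is modelled as a finite field type 'a with CARD('a) = 3^m.
  GF(3) is its prime subfield, i.e. the elements of_nat 0, of_nat 1, of_nat 2.\<close>

definition abs_trace :: "nat \<Rightarrow> 'a::{field,finite} \<Rightarrow> 'a" where
  "abs_trace m x = (\<Sum>i<m. x ^ (3 ^ i))"

definition Qform :: "nat \<Rightarrow> nat \<Rightarrow> 'a::{field,finite} \<Rightarrow> 'a \<Rightarrow> 'a" where
  "Qform m e u y = abs_trace m (u * y ^ (e + 1) + y ^ 2)"

definition radical :: "('a::{field,finite} \<Rightarrow> 'a) \<Rightarrow> 'a set" where
  "radical Q = {x. \<forall>z. Q (x + z) - Q x - Q z = 0}"

definition gf3_span :: "'a::{field,finite} set \<Rightarrow> 'a set" where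
  "gf3_span S = {x. \<exists>c. (\<forall>s\<in>S. c s \<in> {0,1,2::nat}) \<and> x = (\<Sum>s\<in>S. of_nat (c s) * s)}"

definition gf3_dim :: "'a::{field,finite} set \<Rightarrow> nat" where
  "gf3_dim V = (LEAST n. \<exists>S. S \<subseteq> V \<and> card S = n \<and> gf3_span S = V)"

definition qrank :: "nat \<Rightarrow> ('a::{field,finite} \<Rightarrow> 'a) \<Rightarrow> nat" where
  "qrank m Q = m - gf3_dim (radical Q)"

end

theory Submission
  imports Defs "HOL-Computational_Algebra.Polynomial" "HOL-Computational_Algebra.Primes"
begin

text \<open>Write \<open>\<sigma>(t) = t\<^sup>3\<^sup>^\<^sup>h\<close>, an automorphism of order 3. Polarizing \<open>Q\<^sub>u\<close> and using
  \<open>Tr(a\<^sup>\<sigma>) = Tr(a)\<close>, the radical of \<open>Q\<^sub>u\<close> is the kernel of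
  \<open>x \<mapsto> u\<^sup>\<sigma>\<^sup>\<sigma> x\<^sup>\<sigma>\<^sup>\<sigma> + u x\<^sup>\<sigma> - x\<close>. A nonzero kernel element gives, together with
  its two conjugates, a nontrivial solution of a \<open>3 \<times> 3\<close> linear system in
  \<open>x, x\<^sup>\<sigma>, x\<^sup>\<sigma>\<^sup>\<sigma>\<close>, so the determinant \<open>D(u)\<close> of that system vanishes. In characteristic 3
  one has \<open>D(u) + D(-1-u) = -(1 + S\<^sup>2)\<close> with \<open>S = u + u\<^sup>\<sigma> + u\<^sup>\<sigma>\<^sup>\<sigma>\<close>, which is fixed by \<open>\<sigma>\<close> and
  thus lies in \<open>GF(3\<^sup>h)\<close>. As \<open>3\<^sup>h \<equiv> 3 (mod 4)\<close> for odd \<open>h\<close>, \<open>-1\<close> is not a square there, so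
  \<open>D(u)\<close> and \<open>D(-1-u)\<close> cannot both vanish.\<close>

lemma three_pow_odd_mod_4: "odd h \<Longrightarrow> (3::nat) ^ h mod 4 = 3"
proof (elim oddE)
  fix k assume "h = 2 * k + 1"
  have "(9::nat) ^ k mod 4 = 1"
    using power_mod[of "9::nat" 4 k] by simp
  then show "(3::nat) ^ h mod 4 = 3"
    unfolding \<open>h = 2 * k + 1\<close> by (simp add: power_mult mod_mult_right_eq[of 3, symmetric])
qed

lemma of_nat_card_UNIV_eq_0: "of_nat (card (UNIV :: 'a::{ring_1,finite} set)) = (0::'a)"
proof -
  have "(\<Sum>x\<in>UNIV. x + 1) = (\<Sum>x\<in>(UNIV::'a set). x)"
    by (rule sum.reindex_bij_witness[of _ "\<lambda>x. x - 1" "\<lambda>x. x + 1"]) auto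
  then show ?thesis by (simp add: sum.distrib)
qed

lemma CHAR_eq_3_if_card_pow_3:
  assumes "card (UNIV :: 'a::{field,finite} set) = 3 ^ n"
  shows "CHAR('a) = 3"
proof -
  have "prime CHAR('a)"
    by (intro prime_CHAR_semidom finite_imp_CHAR_pos) simp
  moreover have "CHAR('a) dvd card (UNIV :: 'a set)"
    by (simp only: of_nat_eq_0_iff_char_dvd[symmetric] of_nat_card_UNIV_eq_0)
  ultimately have "CHAR('a) dvd 3"
    using assms by (auto intro: prime_dvd_power)
  with \<open>prime CHAR('a)\<close> show ?thesis
    by (intro primes_dvd_imp_eq) simp_all
qed

text \<open>The library's \<open>finite_field_power_card_eq_same\<close> needs the class \<open>finite_field\<close>, which
  the sort \<open>{field, finite}\<close> used here does not provide.\<close>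

lemma power_card_UNIV_eq_self:
  fixes x :: "'a::{field,finite}"
  shows "x ^ card (UNIV :: 'a set) = x"
proof (cases "x = 0")
  case False
  have "(\<Prod>y\<in>UNIV-{0}. x * y) = (\<Prod>y\<in>UNIV-{0}. y)"
    by (rule prod.reindex_bij_witness[of _ "\<lambda>y. y / x" "\<lambda>y. x * y"]) (use False in auto)
  then have "x ^ (card (UNIV :: 'a set) - 1) = 1"
    by (simp add: prod.distrib card_Diff_singleton)
  then show ?thesis
    using finite_UNIV_card_ge_0[where 'a='a] by (metis Suc_diff_1 finite mult.right_neutral power_Suc)
qed (use finite_UNIV_card_ge_0[where 'a='a] in auto)

lemma power_three_pow_add:
  assumes "CHAR('a::comm_ring_1) = 3"
  shows "(x + y :: 'a) ^ 3 ^ k = x ^ 3 ^ k + y ^ 3 ^ k"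
  using assms by (intro freshmans_dream') simp_all

lemma power_three_pow_diff:
  assumes "CHAR('a::comm_ring_1) = 3"
  shows "(x - y :: 'a) ^ 3 ^ k = x ^ 3 ^ k - y ^ 3 ^ k"
  using power_three_pow_add[OF assms, of x "- y" k] by simp

lemma power_three_pow_power_three_pow: "(x ^ 3 ^ i) ^ 3 ^ j = (x::'a::monoid_mult) ^ 3 ^ (i + j)"
  by (simp add: power_mult[symmetric] power_add)

lemma power_three_pow_cube_eq_self:
  assumes "card (UNIV :: 'a::{field,finite} set) = 3 ^ (3 * h)"
  shows "((x ^ 3 ^ h) ^ 3 ^ h) ^ 3 ^ h = (x :: 'a)"
proof -
  have "x ^ 3 ^ (3 * h) = x" using power_card_UNIV_eq_self[of x] assms by simp
  moreover have "h + h + h = 3 * h" by simp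
  ultimately show ?thesis by (simp only: power_three_pow_power_three_pow)
qed

lemma abs_trace_add:
  assumes "CHAR('a::{field,finite}) = 3"
  shows "abs_trace m (x + y :: 'a) = abs_trace m x + abs_trace m y"
  unfolding abs_trace_def by (simp add: power_three_pow_add[OF assms] sum.distrib)

lemma abs_trace_diff:
  assumes "CHAR('a::{field,finite}) = 3"
  shows "abs_trace m (x - y :: 'a) = abs_trace m x - abs_trace m y"
  unfolding abs_trace_def by (simp add: power_three_pow_diff[OF assms] sum_subtractf)

lemma abs_trace_power_three:
  assumes "card (UNIV :: 'a::{field,finite} set) = 3 ^ m"
  shows "abs_trace m (x ^ 3 :: 'a) = abs_trace m x"
proof -
  define f where "f i = x ^ 3 ^ i" for i
  have "f 0 + (\<Sum>i<m. f (Suc i)) = (\<Sum>i<m. f i) + f m"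
    by (simp only: sum.lessThan_Suc_shift[symmetric] sum.lessThan_Suc)
  moreover have "f m = f 0"
    using power_card_UNIV_eq_self[of x] assms by (simp add: f_def)
  moreover have "abs_trace m (x ^ 3) = (\<Sum>i<m. f (Suc i))"
    unfolding abs_trace_def f_def by (simp add: power_mult[symmetric] mult.commute)
  ultimately show ?thesis unfolding abs_trace_def f_def by simp
qed

lemma abs_trace_power_three_pow:
  assumes "card (UNIV :: 'a::{field,finite} set) = 3 ^ m"
  shows "abs_trace m (x ^ 3 ^ k :: 'a) = abs_trace m x"
proof (induction k)
  case (Suc k)
  have "x ^ 3 ^ Suc k = (x ^ 3 ^ k) ^ 3"
    by (simp add: power_mult[symmetric] mult.commute)
  then show ?case using Suc abs_trace_power_three[OF assms] by simp
qed simp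

lemma abs_trace_nondegenerate:
  assumes card: "card (UNIV :: 'a::{field,finite} set) = 3 ^ m" and "m > 0"
    and orth: "\<And>z. abs_trace m (a * z) = (0::'a)"
  shows "a = 0"
proof (rule ccontr)
  assume "a \<noteq> 0"
  then have trace_zero: "abs_trace m w = 0" for w :: 'a
    using orth[of "w / a"] by simp
  define p :: "'a poly" where "p = (\<Sum>i<m. monom 1 (3 ^ i))"
  have poly_p: "poly p w = abs_trace m w" for w
    unfolding p_def abs_trace_def by (simp add: poly_sum poly_monom)
  have "coeff p (3 ^ (m - 1)) = (\<Sum>i<m. if i = m - 1 then 1 else 0)"
    unfolding p_def coeff_sum coeff_monom by (intro sum.cong) auto
  with \<open>m > 0\<close> have "p \<noteq> 0" by auto
  then have "card {x. poly p x = 0} \<le> degree p" by (rule card_poly_roots_bound)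
  also have "degree p \<le> 3 ^ (m - 1)" unfolding p_def
    by (rule degree_sum_le) (auto intro: order.trans[OF degree_monom_le])
  finally have "card (UNIV :: 'a set) \<le> 3 ^ (m - 1)" using poly_p trace_zero by simp
  with card \<open>m > 0\<close> show False
    using power_strict_increasing[of "m - 1" m "3::nat"] by simp
qed

text \<open>Raising the term \<open>u x z\<^sup>3\<^sup>^\<^sup>h\<close> to the power \<open>3\<^sup>k\<close> under the trace moves the twist off \<open>z\<close>.\<close>

lemma Qform_polar:
  assumes char: "CHAR('a::{field,finite}) = 3" and card: "card (UNIV :: 'a set) = 3 ^ m"
    and "m = h + k"
  shows "Qform m (3 ^ h) u (x + z) - Qform m (3 ^ h) u x - Qform m (3 ^ h) u z
     = abs_trace m ((u ^ 3 ^ k * x ^ 3 ^ k + u * x ^ 3 ^ h - x) * (z :: 'a))"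
proof -
  let ?T = "abs_trace m :: 'a \<Rightarrow> 'a"
  have three: "(3::'a) = 0"
    using of_nat_CHAR[where 'a='a] char by simp
  have "(x + z) ^ (3 ^ h + 1) = (x ^ 3 ^ h + z ^ 3 ^ h) * (x + z)"
    using power_three_pow_add[OF char] by simp
  then have "(u * (x + z) ^ (3 ^ h + 1) + (x + z)\<^sup>2) - (u * x ^ (3 ^ h + 1) + x\<^sup>2)
      - (u * z ^ (3 ^ h + 1) + z\<^sup>2) = u * x ^ 3 ^ h * z + u * x * z ^ 3 ^ h - x * z + 3 * (x * z)"
    by (simp add: algebra_simps power2_eq_square)
  then have "Qform m (3 ^ h) u (x + z) - Qform m (3 ^ h) u x - Qform m (3 ^ h) u z
      = ?T (u * x ^ 3 ^ h * z) + ?T (u * x * z ^ 3 ^ h) - ?T (x * z)"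
    unfolding Qform_def by (simp add: abs_trace_diff[OF char, symmetric]
        abs_trace_add[OF char, symmetric] three)
  also have "?T (u * x * z ^ 3 ^ h) = ?T ((u * x * z ^ 3 ^ h) ^ 3 ^ k)"
    by (rule abs_trace_power_three_pow[OF card, symmetric])
  also have "(u * x * z ^ 3 ^ h) ^ 3 ^ k = u ^ 3 ^ k * x ^ 3 ^ k * z"
    using power_card_UNIV_eq_self[of z] card \<open>m = h + k\<close>
    by (simp add: power_mult_distrib power_mult[symmetric] power_add[symmetric])
  finally show ?thesis
    by (simp add: abs_trace_diff[OF char, symmetric] abs_trace_add[OF char, symmetric]
        algebra_simps)
qed

lemma mem_radical_Qform_iff:
  fixes u x :: "'a::{field,finite}"
  assumes char: "CHAR('a) = 3" and card: "card (UNIV :: 'a set) = 3 ^ m"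
    and "m = h + k" "m > 0"
  shows "x \<in> radical (Qform m (3 ^ h) u) \<longleftrightarrow> u ^ 3 ^ k * x ^ 3 ^ k + u * x ^ 3 ^ h - x = 0"
    (is "_ \<longleftrightarrow> ?L = 0")
proof -
  have "x \<in> radical (Qform m (3 ^ h) u) \<longleftrightarrow> (\<forall>z. abs_trace m (?L * z) = 0)"
    by (simp only: radical_def mem_Collect_eq Qform_polar[OF char card \<open>m = h + k\<close>])
  also have "\<dots> \<longleftrightarrow> ?L = 0"
  proof
    assume "\<forall>z. abs_trace m (?L * z) = 0"
    then show "?L = 0" using abs_trace_nondegenerate[OF card \<open>m > 0\<close>, of ?L] by blast
  next
    assume "?L = 0"
    then show "\<forall>z. abs_trace m (?L * z) = 0"
      unfolding \<open>?L = 0\<close> by (simp add: abs_trace_def power_0_left)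
  qed
  finally show ?thesis .
qed

lemma gf3_dim_zero: "gf3_dim {0::'a::{field,finite}} = 0"
  unfolding gf3_dim_def by (rule Least_eq_0) (rule exI[of _ "{}"], auto simp: gf3_span_def)

lemma qrank_eq_if_radical_eq_zero: "radical Q = {0} \<Longrightarrow> qrank m Q = m"
  by (simp add: qrank_def gf3_dim_zero)

text \<open>\<open>cyclic_det a b c\<close> is the determinant of \<open>[[-1, a, c], [a, -1, b], [c, b, -1]]\<close>, the
  matrix of the equation \<open>c w + a y - x = 0\<close> and its two conjugates in the unknowns
  \<open>(x, y, w) = (x, x\<^sup>\<sigma>, x\<^sup>\<sigma>\<^sup>\<sigma>)\<close>, where \<open>(a, b, c) = (u, u\<^sup>\<sigma>, u\<^sup>\<sigma>\<^sup>\<sigma>)\<close>;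
  \<open>cyclic_det_mult_eq\<close> is Cramer's rule for the first unknown.\<close>

definition cyclic_det :: "'a::comm_ring_1 \<Rightarrow> 'a \<Rightarrow> 'a \<Rightarrow> 'a" where
  "cyclic_det a b c = a\<^sup>2 + b\<^sup>2 + c\<^sup>2 + 2 * a * b * c - 1"

lemma cyclic_det_mult_eq:
  "cyclic_det a b c * x
    = (1 - b\<^sup>2) * (c * w + a * y - x) + (a + b * c) * (a * x + b * w - y)
      + (a * b + c) * (b * y + c * x - w)"
  by (simp add: cyclic_det_def algebra_simps power2_eq_square)

lemma cyclic_det_eq_0_if_twisted_kernel:
  fixes s :: "'a::field \<Rightarrow> 'a"
  assumes add: "\<And>a b. s (a + b) = s a + s b" and mult: "\<And>a b. s (a * b) = s a * s b"
    and order3: "\<And>t. s (s (s t)) = t"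
    and kernel: "s (s u) * s (s x) + u * s x - x = 0" and "x \<noteq> 0"
  shows "cyclic_det u (s u) (s (s u)) = 0"
proof -
  have zero: "s 0 = 0" using add[of 0 0] by (metis add_cancel_right_right add_0)
  have diff: "s (a - b) = s a - s b" for a b
    using add[of "a - b" b] by (simp add: algebra_simps)
  have kernel': "u * x + s u * s (s x) - s x = 0"
    using arg_cong[OF kernel, of s] by (simp add: add mult diff zero order3)
  have kernel'': "s u * s x + s (s u) * x - s (s x) = 0"
    using arg_cong[OF kernel', of s] by (simp add: add mult diff zero order3)
  have "cyclic_det u (s u) (s (s u)) * x = 0"
    unfolding cyclic_det_mult_eq[where y = "s x" and w = "s (s x)"]
    by (simp only: kernel kernel' kernel'' mult_zero_right add_0_right)
  with \<open>x \<noteq> 0\<close> show ?thesis by simp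
qed

lemma cyclic_det_add_cyclic_det_shift:
  fixes a b c :: "'a::comm_ring_1"
  assumes "(3::'a) = 0"
  shows "cyclic_det a b c + cyclic_det (-1 - a) (-1 - b) (-1 - c) = - (1 + (a + b + c)\<^sup>2)"
proof -
  have "cyclic_det a b c + cyclic_det (-1 - a) (-1 - b) (-1 - c) + (1 + (a + b + c)\<^sup>2)
      = 3 * (a\<^sup>2 + b\<^sup>2 + c\<^sup>2)"
    by (simp add: cyclic_det_def algebra_simps power2_eq_square)
  with assms show ?thesis by (simp only: eq_neg_iff_add_eq_0 mult_zero_left)
qed

lemma sqrt_minus_one_not_fixed_by_odd_frobenius:
  assumes char: "CHAR('a::field) = 3" and "odd h" and fixed: "s ^ 3 ^ h = s"
  shows "s\<^sup>2 \<noteq> (-1 :: 'a)"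
proof
  assume sq: "s\<^sup>2 = -1"
  have "s ^ 4 = (s\<^sup>2)\<^sup>2" by (simp flip: power_mult)
  with sq have "s ^ 4 = 1" by simp
  have "(3::nat) ^ h = 4 * (3 ^ h div 4) + 3"
    using three_pow_odd_mod_4[OF \<open>odd h\<close>] div_mult_mod_eq[of "3 ^ h" "4::nat"] by linarith
  then have "s ^ 3 ^ h = s ^ (4 * (3 ^ h div 4) + 3)" by (rule arg_cong)
  also have "\<dots> = - s"
    using \<open>s ^ 4 = 1\<close> sq by (simp add: power_add power_mult power2_eq_square power3_eq_cube)
  finally have "2 * s = 0" using fixed by simp
  moreover have "(2::'a) \<noteq> 0"
    using of_nat_eq_0_iff_char_dvd[of 2, where 'a='a] char by simp
  ultimately show False using sq by simp
qed

lemma Qform_full_rank_or_cyclic_det_eq_0: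
  fixes u :: "'a::{field,finite}"
  assumes char: "CHAR('a) = 3" and card: "card (UNIV :: 'a set) = 3 ^ (3 * h)" and "h > 0"
  shows "qrank (3 * h) (Qform (3 * h) (3 ^ h) u) = 3 * h
       \<or> cyclic_det u (u ^ 3 ^ h) ((u ^ 3 ^ h) ^ 3 ^ h) = 0"
proof (cases "radical (Qform (3 * h) (3 ^ h) u) = {0}")
  case True
  then show ?thesis by (simp add: qrank_eq_if_radical_eq_zero)
next
  case False
  define s :: "'a \<Rightarrow> 'a" where "s t = t ^ 3 ^ h" for t
  have "x \<in> radical (Qform (3 * h) (3 ^ h) u) \<longleftrightarrow> s (s u) * s (s x) + u * s x - x = 0" for x
  proof -
    have "x \<in> radical (Qform (3 * h) (3 ^ h) u)
        \<longleftrightarrow> u ^ 3 ^ (2 * h) * x ^ 3 ^ (2 * h) + u * x ^ 3 ^ h - x = 0"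
      using \<open>h > 0\<close> by (intro mem_radical_Qform_iff[OF char card]) simp_all
    moreover have "t ^ 3 ^ (2 * h) = s (s t)" for t
      by (simp only: s_def power_three_pow_power_three_pow mult_2)
    ultimately show ?thesis by (simp only: s_def)
  qed
  moreover have "0 \<in> radical (Qform (3 * h) (3 ^ h) u)"
    using calculation by (simp add: s_def power_0_left)
  ultimately obtain x where "s (s u) * s (s x) + u * s x - x = 0" "x \<noteq> 0"
    using False by blast
  then have "cyclic_det u (s u) (s (s u)) = 0"
    using power_three_pow_cube_eq_self[OF card] power_three_pow_add[OF char]
    by (intro cyclic_det_eq_0_if_twisted_kernel) (simp_all add: s_def power_mult_distrib)
  then show ?thesis by (simp add: s_def)
qed

theorem mainTheorem13:
  fixes u :: "'a::{field,finite}" and h :: nat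
  assumes "odd h" and "card (UNIV :: 'a set) = 3 ^ (3 * h)"
  shows "qrank (3 * h) (Qform (3 * h) (3 ^ h) u) = 3 * h
       \<or> qrank (3 * h) (Qform (3 * h) (3 ^ h) (-1 - u)) = 3 * h"
proof -
  have "h > 0" using \<open>odd h\<close> by (cases h) auto
  have char: "CHAR('a) = 3" using CHAR_eq_3_if_card_pow_3[OF assms(2)] .
  then have three: "(3::'a) = 0" using of_nat_CHAR[where 'a='a] by simp
  define s :: "'a \<Rightarrow> 'a" where "s t = t ^ 3 ^ h" for t
  have s_diff: "s (a - b) = s a - s b" for a b
    unfolding s_def by (rule power_three_pow_diff[OF char])
  define S where "S = u + s u + s (s u)"
  have "S ^ 3 ^ h = S"
    using power_three_pow_cube_eq_self[OF assms(2), of u]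
    by (simp add: S_def s_def power_three_pow_add[OF char])
  then have "S\<^sup>2 \<noteq> -1" by (rule sqrt_minus_one_not_fixed_by_odd_frobenius[OF char \<open>odd h\<close>])
  have "s (-1) = -1" by (simp add: s_def)
  then have "cyclic_det u (s u) (s (s u)) + cyclic_det (-1 - u) (s (-1 - u)) (s (s (-1 - u)))
      = - (1 + S\<^sup>2)"
    unfolding s_diff S_def by (simp only: cyclic_det_add_cyclic_det_shift[OF three])
  with \<open>S\<^sup>2 \<noteq> -1\<close>
  have "cyclic_det u (s u) (s (s u)) + cyclic_det (-1 - u) (s (-1 - u)) (s (s (-1 - u))) \<noteq> 0"
    by (simp add: add_eq_0_iff)
  then show ?thesis
    using Qform_full_rank_or_cyclic_det_eq_0[OF char assms(2) \<open>h > 0\<close>, of u]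
      Qform_full_rank_or_cyclic_det_eq_0[OF char assms(2) \<open>h > 0\<close>, of "-1 - u"]
    unfolding s_def by auto
qed

end
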